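(* Let $X=\bigsqcup_{\lambda\in\Lambda}G_\lambda$ be an MCQ, $R$ a ring and $M$ a left $R$-module. For every 6-tuple $(f_1,f_2,f_3,f_4;\phi_1,\phi_2)$ of maps ($f_1,f_2:X\times X\to R$, $f_3,f_4:\bigsqcup_\lambda(G_\lambda\times G_\lambda)\to R$, $\phi_1:X\times X\to M$, $\phi_2:\bigsqcup_\lambda(G_\lambda\times G_\lambda)\to M$) satisfying conditions (0-i)–(4-$\phi$), there exists an augmented MCQ Alexander pair $(g_1,g_2;\psi_1,\psi_2)$ (with $g_1,g_2:X\times X\to R$, $\psi_1:X\times X\to M$, $\psi_2:\bigsqcup_\lambda(G_\lambda\times G_\lambda)\to M$) such that the MCQs $\widetilde X(f_1,f_2,f_3,f_4;\phi_1,\phi_2)$ and $\widetilde X(g_1,g_2;\psi_1,\psi_2)$ are isomorphic.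
   Context: A multiple conjugation quandle (MCQ) is a set $X=\bigsqcup_{\lambda\in\Lambda}G_\lambda$ that is a disjoint union of groups $G_\lambda$, together with a binary operation $\triangleleft:X\times X\to X$ such that: (i) for all $a,b\in G_\lambda$, $a\triangleleft b=b^{-1}ab$; (ii) for all $x\in X$ and $a,b\in G_\lambda$, $x\triangleleft e_\lambda=x$ and $x\triangleleft(ab)=(x\triangleleft a)\triangleleft b$, where $e_\lambda$ is the identity of $G_\lambda$; (iii) for all $x,y,z\in X$, $(x\triangleleft y)\triangleleft z=(x\triangleleft z)\triangleleft(y\triangleleft z)$; (iv) for all $x\in X$ and $a,b\in G_\lambda$, the elements $a\triangleleft x$ and $b\triangleleft x$ lie in a common group $G_\mu$ and $(ab)\triangleleft x=(a\triangleleft x)(b\triangleleft x)$. For $x\in X$, $G_x$ denotes the group containing $x$, $e_x$ its identity, $x^{-1}$ the inverse of $x$ in $G_x$. $\bigsqcup_{\lambda}(G_\lambda\times G_\lambda)$ is the set of pairs of elements lying in a common group $G_\lambda$. An MCQ isomorphism is a bijection $f$ with $f(x\triangleleft y)=f(x)\triangleleft f(y)$ for all $x,y$ and $f(ab)=f(a)f(b)$ whenever $a,b$ lie in a common group. Rings have a multiplicative identity $1\neq0$ and need not be commutative. Conditions (0-i)–(4-$\phi$) on a 6-tuple $(f_1,f_2,f_3,f_4;\phi_1,\phi_2)$: For all $\lambda$ and $a,b,c\in G_\lambda$: (0-i) $f_3(a,b)$, $f_4(a,b)$ invertible; (0-ii) $f_3(ab,c)f_3(a,b)=f_3(a,bc)$;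 (0-iii) $f_3(ab,c)f_4(a,b)=f_4(a,bc)f_3(b,c)$; (0-iv) $f_4(ab,c)=f_4(a,bc)f_4(b,c)$; (0-$\phi$) $f_3(ab,c)\phi_2(a,b)+\phi_2(ab,c)=f_4(a,bc)\phi_2(b,c)+\phi_2(a,bc)$. For all $a,b\in G_\lambda$: (1-i) $f_1(a,b)=f_4(b^{-1},ab)f_3(a,b)$; (1-ii) $f_3(b,b^{-1}ab)+f_4(b,b^{-1}ab)f_2(a,b)=f_4(a,b)$; (1-$\phi$) $f_4(b,b^{-1}ab)\phi_1(a,b)+\phi_2(b,b^{-1}ab)=\phi_2(a,b)$. For all $x\in X$, $a,b\in G_\lambda$: (2-i) $f_1(x,e_\lambda)=1$; (2-ii) $f_1(x,ab)=f_1(x\triangleleft a,b)f_1(x,a)$; (2-iii) $f_2(x,ab)f_3(a,b)=f_1(x\triangleleft a,b)f_2(x,a)$; (2-iv) $f_2(x,ab)f_4(a,b)=f_2(x\triangleleft a,b)$; (2-$\phi$i) $f_2(x,e_\lambda)\phi_2(e_\lambda,e_\lambda)=\phi_1(x,e_\lambda)$; (2-$\phi$ii) $f_2(x,ab)\phi_2(a,b)+\phi_1(x,ab)=f_1(x\triangleleft a,b)\phi_1(x,a)+\phi_1(x\triangleleft a,b)$. For all $x,y,z\in X$: (3-i) $f_1(x\triangleleft y,z)f_1(x,y)=f_1(x\triangleleft z,y\triangleleft z)f_1(x,z)$; (3-ii) $f_1(x\triangleleft y,z)f_2(x,y)=f_2(x\triangleleft z,y\triangleleft z)f_1(y,z)$;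 (3-iii) $f_2(x\triangleleft y,z)=f_1(x\triangleleft z,y\triangleleft z)f_2(x,z)+f_2(x\triangleleft z,y\triangleleft z)f_2(y,z)$; (3-$\phi$) $f_1(x\triangleleft y,z)\phi_1(x,y)+\phi_1(x\triangleleft y,z)=f_1(x\triangleleft z,y\triangleleft z)\phi_1(x,z)+f_2(x\triangleleft z,y\triangleleft z)\phi_1(y,z)+\phi_1(x\triangleleft z,y\triangleleft z)$. For all $a,b\in G_\lambda$, $x\in X$: (4-i) $f_1(ab,x)f_3(a,b)=f_3(a\triangleleft x,b\triangleleft x)f_1(a,x)$; (4-ii) $f_1(ab,x)f_4(a,b)=f_4(a\triangleleft x,b\triangleleft x)f_1(b,x)$; (4-iii) $f_2(ab,x)=f_3(a\triangleleft x,b\triangleleft x)f_2(a,x)+f_4(a\triangleleft x,b\triangleleft x)f_2(b,x)$; (4-$\phi$) $f_1(ab,x)\phi_2(a,b)+\phi_1(ab,x)=f_3(a\triangleleft x,b\triangleleft x)\phi_1(a,x)+f_4(a\triangleleft x,b\triangleleft x)\phi_1(b,x)+\phi_2(a\triangleleft x,b\triangleleft x)$. For such a 6-tuple, $\widetilde X(f_1,f_2,f_3,f_4;\phi_1,\phi_2)$ is the MCQ $\bigsqcup_\lambda(G_\lambda\times M)$ with $(x,u)\triangleleft(y,v)=(x\triangleleft y,\ f_1(x,y)u+f_2(x,y)v+\phi_1(x,y))$ and, for $a,b\in G_\lambda$, $(a,u)(b,v)=(ab,\ f_3(a,b)u+f_4(a,b)v+\phi_2(a,b))$. An MCQ Alexander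 pair is a pair of maps $g_1,g_2:X\times X\to R$ such that: (A1) for all $a,b\in G_\lambda$: $g_1(a,b)+g_2(a,b)=g_1(a,a^{-1}b)$; (A2) for all $a,b\in G_\lambda$, $x\in X$: $g_1(a,x)=g_1(b,x)$ and $g_2(ab,x)=g_2(a,x)+g_1(b\triangleleft x,a^{-1}\triangleleft x)g_2(b,x)$; (A3) for all $x\in X$, $a,b\in G_\lambda$: $g_1(x,e_\lambda)=1$, $g_1(x,ab)=g_1(x\triangleleft a,b)g_1(x,a)$, $g_2(x,ab)=g_1(x\triangleleft a,b)g_2(x,a)$; (A4) for all $x,y,z\in X$: $g_1(x\triangleleft y,z)g_1(x,y)=g_1(x\triangleleft z,y\triangleleft z)g_1(x,z)$; $g_1(x\triangleleft y,z)g_2(x,y)=g_2(x\triangleleft z,y\triangleleft z)g_1(y,z)$; $g_2(x\triangleleft y,z)=g_1(x\triangleleft z,y\triangleleft z)g_2(x,z)+g_2(x\triangleleft z,y\triangleleft z)g_2(y,z)$. For an MCQ Alexander pair $(g_1,g_2)$, a $(g_1,g_2)$-twisted 2-cocycle is a pair $\psi_1:X\times X\to M$, $\psi_2:\bigsqcup_\lambda(G_\lambda\times G_\lambda)\to M$ with: (T1) for $a,b,c\in G_\lambda$: $\psi_2(a,b)+\psi_2(ab,c)=g_1(a,a^{-1})\psi_2(b,c)+\psi_2(a,bc)$; (T2) for $a,b\in G_\lambda$: $g_1(b,b^{-1})\psi_1(a,b)+\psi_2(b,b^{-1}ab)=\psi_2(a,b)$; (T3) for $x\in X$, $a,b\in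 G_\lambda$: $g_2(x,ab)\psi_2(a,b)+\psi_1(x,ab)=g_1(x\triangleleft a,b)\psi_1(x,a)+\psi_1(x\triangleleft a,b)$; (T4) for $x,y,z\in X$: $g_1(x\triangleleft y,z)\psi_1(x,y)+\psi_1(x\triangleleft y,z)=g_1(x\triangleleft z,y\triangleleft z)\psi_1(x,z)+g_2(x\triangleleft z,y\triangleleft z)\psi_1(y,z)+\psi_1(x\triangleleft z,y\triangleleft z)$; (T5) for $a,b\in G_\lambda$, $x\in X$: $g_1(ab,x)\psi_2(a,b)+\psi_1(ab,x)=\psi_1(a,x)+g_1(a\triangleleft x,a^{-1}\triangleleft x)\psi_1(b,x)+\psi_2(a\triangleleft x,b\triangleleft x)$. $(g_1,g_2;\psi_1,\psi_2)$ is an augmented MCQ Alexander pair if $(g_1,g_2)$ is an MCQ Alexander pair and $(\psi_1,\psi_2)$ is a $(g_1,g_2)$-twisted 2-cocycle. For such a pair, $\widetilde X(g_1,g_2;\psi_1,\psi_2)$ is the MCQ $\bigsqcup_\lambda(G_\lambda\times M)$ with $(x,u)\triangleleft(y,v)=(x\triangleleft y,\ g_1(x,y)u+g_2(x,y)v+\psi_1(x,y))$ and, for $a,b\in G_\lambda$, $(a,u)(b,v)=(ab,\ u+g_1(a,a^{-1})v+\psi_2(a,b))$. *)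

theory Defs
  imports Main
begin

text \<open>An MCQ is given by a carrier X, a labelling lab (x lies in the group G_(lab x)),
  the group multiplication mul (meaningful on pairs with equal label), the identity
  e \<lambda> of G_\<lambda>, the group inverse iv, and the quandle operation tri.\<close>

definition mcq ::
  "'x set \<Rightarrow> ('x \<Rightarrow> 'l) \<Rightarrow> ('x \<Rightarrow> 'x \<Rightarrow> 'x) \<Rightarrow> ('l \<Rightarrow> 'x) \<Rightarrow> ('x \<Rightarrow> 'x)
   \<Rightarrow> ('x \<Rightarrow> 'x \<Rightarrow> 'x) \<Rightarrow> bool" where
  "mcq X lab mul e iv tri \<longleftrightarrow>
    \<comment> \<open>each G_\<lambda> is a group\<close>
    (\<forall>a\<in>X. \<forall>b\<in>X. lab a = lab b \<longrightarrow> mul a b \<in> X \<and> lab (mul a b) = lab a) \<and>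
    (\<forall>a\<in>X. \<forall>b\<in>X. \<forall>c\<in>X. lab a = lab b \<and> lab b = lab c \<longrightarrow>
        mul (mul a b) c = mul a (mul b c)) \<and>
    (\<forall>a\<in>X. e (lab a) \<in> X \<and> lab (e (lab a)) = lab a \<and>
        mul (e (lab a)) a = a \<and> mul a (e (lab a)) = a) \<and>
    (\<forall>a\<in>X. iv a \<in> X \<and> lab (iv a) = lab a \<and>
        mul (iv a) a = e (lab a) \<and> mul a (iv a) = e (lab a)) \<and>
    (\<forall>x\<in>X. \<forall>y\<in>X. tri x y \<in> X) \<and>
    \<comment> \<open>(i)\<close>
    (\<forall>a\<in>X. \<forall>b\<in>X. lab a = lab b \<longrightarrow> tri a b = mul (mul (iv b) a) b) \<and>
    \<comment> \<open>(ii)\<close>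
    (\<forall>x\<in>X. \<forall>a\<in>X. tri x (e (lab a)) = x) \<and>
    (\<forall>x\<in>X. \<forall>a\<in>X. \<forall>b\<in>X. lab a = lab b \<longrightarrow> tri x (mul a b) = tri (tri x a) b) \<and>
    \<comment> \<open>(iii)\<close>
    (\<forall>x\<in>X. \<forall>y\<in>X. \<forall>z\<in>X. tri (tri x y) z = tri (tri x z) (tri y z)) \<and>
    \<comment> \<open>(iv)\<close>
    (\<forall>x\<in>X. \<forall>a\<in>X. \<forall>b\<in>X. lab a = lab b \<longrightarrow>
        lab (tri a x) = lab (tri b x) \<and> tri (mul a b) x = mul (tri a x) (tri b x))"

definition lmodule :: "('r::ring_1 \<Rightarrow> 'm::ab_group_add \<Rightarrow> 'm) \<Rightarrow> bool" where
  "lmodule sm \<longleftrightarrow>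
    (\<forall>r u v. sm r (u + v) = sm r u + sm r v) \<and>
    (\<forall>r s u. sm (r + s) u = sm r u + sm s u) \<and>
    (\<forall>r s u. sm (r * s) u = sm r (sm s u)) \<and>
    (\<forall>u. sm 1 u = u)"

definition invertible_r :: "'r::ring_1 \<Rightarrow> bool" where
  "invertible_r x \<longleftrightarrow> (\<exists>y. x * y = 1 \<and> y * x = 1)"

text \<open>Conditions (0-i)--(4-phi) on (f1,f2,f3,f4;phi1,phi2).  f3, f4, phi2 are only
  meaningful on pairs lying in a common group.\<close>
definition six_cond ::
  "'x set \<Rightarrow> ('x \<Rightarrow> 'l) \<Rightarrow> ('x \<Rightarrow> 'x \<Rightarrow> 'x) \<Rightarrow> ('l \<Rightarrow> 'x) \<Rightarrow> ('x \<Rightarrow> 'x)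
   \<Rightarrow> ('x \<Rightarrow> 'x \<Rightarrow> 'x) \<Rightarrow> ('r::ring_1 \<Rightarrow> 'm::ab_group_add \<Rightarrow> 'm)
   \<Rightarrow> ('x \<Rightarrow> 'x \<Rightarrow> 'r) \<Rightarrow> ('x \<Rightarrow> 'x \<Rightarrow> 'r) \<Rightarrow> ('x \<Rightarrow> 'x \<Rightarrow> 'r) \<Rightarrow> ('x \<Rightarrow> 'x \<Rightarrow> 'r)
   \<Rightarrow> ('x \<Rightarrow> 'x \<Rightarrow> 'm) \<Rightarrow> ('x \<Rightarrow> 'x \<Rightarrow> 'm) \<Rightarrow> bool" where
  "six_cond X lab mul e iv tri sm f1 f2 f3 f4 phi1 phi2 \<longleftrightarrow>
    \<comment> \<open>(0-*)\<close>
    (\<forall>a\<in>X. \<forall>b\<in>X. lab a = lab b \<longrightarrow> invertible_r (f3 a b) \<and> invertible_r (f4 a b)) \<and>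
    (\<forall>a\<in>X. \<forall>b\<in>X. \<forall>c\<in>X. lab a = lab b \<and> lab b = lab c \<longrightarrow>
        f3 (mul a b) c * f3 a b = f3 a (mul b c) \<and>
        f3 (mul a b) c * f4 a b = f4 a (mul b c) * f3 b c \<and>
        f4 (mul a b) c = f4 a (mul b c) * f4 b c \<and>
        sm (f3 (mul a b) c) (phi2 a b) + phi2 (mul a b) c
          = sm (f4 a (mul b c)) (phi2 b c) + phi2 a (mul b c)) \<and>
    \<comment> \<open>(1-*)\<close>
    (\<forall>a\<in>X. \<forall>b\<in>X. lab a = lab b \<longrightarrow>
        f1 a b = f4 (iv b) (mul a b) * f3 a b \<and>
        f3 b (mul (mul (iv b) a) b) + f4 b (mul (mul (iv b) a) b) * f2 a b = f4 a b \<and>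
        sm (f4 b (mul (mul (iv b) a) b)) (phi1 a b) + phi2 b (mul (mul (iv b) a) b)
          = phi2 a b) \<and>
    \<comment> \<open>(2-*)\<close>
    (\<forall>x\<in>X. \<forall>a\<in>X. f1 x (e (lab a)) = 1 \<and>
        sm (f2 x (e (lab a))) (phi2 (e (lab a)) (e (lab a))) = phi1 x (e (lab a))) \<and>
    (\<forall>x\<in>X. \<forall>a\<in>X. \<forall>b\<in>X. lab a = lab b \<longrightarrow>
        f1 x (mul a b) = f1 (tri x a) b * f1 x a \<and>
        f2 x (mul a b) * f3 a b = f1 (tri x a) b * f2 x a \<and>
        f2 x (mul a b) * f4 a b = f2 (tri x a) b \<and>
        sm (f2 x (mul a b)) (phi2 a b) + phi1 x (mul a b)
          = sm (f1 (tri x a) b) (phi1 x a) + phi1 (tri x a) b) \<and>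
    \<comment> \<open>(3-*)\<close>
    (\<forall>x\<in>X. \<forall>y\<in>X. \<forall>z\<in>X.
        f1 (tri x y) z * f1 x y = f1 (tri x z) (tri y z) * f1 x z \<and>
        f1 (tri x y) z * f2 x y = f2 (tri x z) (tri y z) * f1 y z \<and>
        f2 (tri x y) z = f1 (tri x z) (tri y z) * f2 x z + f2 (tri x z) (tri y z) * f2 y z \<and>
        sm (f1 (tri x y) z) (phi1 x y) + phi1 (tri x y) z
          = sm (f1 (tri x z) (tri y z)) (phi1 x z) + sm (f2 (tri x z) (tri y z)) (phi1 y z)
            + phi1 (tri x z) (tri y z)) \<and>
    \<comment> \<open>(4-*)\<close>
    (\<forall>a\<in>X. \<forall>b\<in>X. \<forall>x\<in>X. lab a = lab b \<longrightarrow>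
        f1 (mul a b) x * f3 a b = f3 (tri a x) (tri b x) * f1 a x \<and>
        f1 (mul a b) x * f4 a b = f4 (tri a x) (tri b x) * f1 b x \<and>
        f2 (mul a b) x = f3 (tri a x) (tri b x) * f2 a x + f4 (tri a x) (tri b x) * f2 b x \<and>
        sm (f1 (mul a b) x) (phi2 a b) + phi1 (mul a b) x
          = sm (f3 (tri a x) (tri b x)) (phi1 a x) + sm (f4 (tri a x) (tri b x)) (phi1 b x)
            + phi2 (tri a x) (tri b x))"

definition mcq_alexander_pair ::
  "'x set \<Rightarrow> ('x \<Rightarrow> 'l) \<Rightarrow> ('x \<Rightarrow> 'x \<Rightarrow> 'x) \<Rightarrow> ('l \<Rightarrow> 'x) \<Rightarrow> ('x \<Rightarrow> 'x)
   \<Rightarrow> ('x \<Rightarrow> 'x \<Rightarrow> 'x) \<Rightarrow> ('x \<Rightarrow> 'x \<Rightarrow> 'r::ring_1) \<Rightarrow> ('x \<Rightarrow> 'x \<Rightarrow> 'r) \<Rightarrow> bool" where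
  "mcq_alexander_pair X lab mul e iv tri g1 g2 \<longleftrightarrow>
    \<comment> \<open>(A1)\<close>
    (\<forall>a\<in>X. \<forall>b\<in>X. lab a = lab b \<longrightarrow> g1 a b + g2 a b = g1 a (mul (iv a) b)) \<and>
    \<comment> \<open>(A2)\<close>
    (\<forall>a\<in>X. \<forall>b\<in>X. \<forall>x\<in>X. lab a = lab b \<longrightarrow>
        g1 a x = g1 b x \<and>
        g2 (mul a b) x = g2 a x + g1 (tri b x) (tri (iv a) x) * g2 b x) \<and>
    \<comment> \<open>(A3)\<close>
    (\<forall>x\<in>X. \<forall>a\<in>X. g1 x (e (lab a)) = 1) \<and>
    (\<forall>x\<in>X. \<forall>a\<in>X. \<forall>b\<in>X. lab a = lab b \<longrightarrow>
        g1 x (mul a b) = g1 (tri x a) b * g1 x a \<and>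
        g2 x (mul a b) = g1 (tri x a) b * g2 x a) \<and>
    \<comment> \<open>(A4)\<close>
    (\<forall>x\<in>X. \<forall>y\<in>X. \<forall>z\<in>X.
        g1 (tri x y) z * g1 x y = g1 (tri x z) (tri y z) * g1 x z \<and>
        g1 (tri x y) z * g2 x y = g2 (tri x z) (tri y z) * g1 y z \<and>
        g2 (tri x y) z = g1 (tri x z) (tri y z) * g2 x z + g2 (tri x z) (tri y z) * g2 y z)"

definition twisted_2cocycle ::
  "'x set \<Rightarrow> ('x \<Rightarrow> 'l) \<Rightarrow> ('x \<Rightarrow> 'x \<Rightarrow> 'x) \<Rightarrow> ('l \<Rightarrow> 'x) \<Rightarrow> ('x \<Rightarrow> 'x)
   \<Rightarrow> ('x \<Rightarrow> 'x \<Rightarrow> 'x) \<Rightarrow> ('r::ring_1 \<Rightarrow> 'm::ab_group_add \<Rightarrow> 'm)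
   \<Rightarrow> ('x \<Rightarrow> 'x \<Rightarrow> 'r) \<Rightarrow> ('x \<Rightarrow> 'x \<Rightarrow> 'r) \<Rightarrow> ('x \<Rightarrow> 'x \<Rightarrow> 'm) \<Rightarrow> ('x \<Rightarrow> 'x \<Rightarrow> 'm) \<Rightarrow> bool" where
  "twisted_2cocycle X lab mul e iv tri sm g1 g2 psi1 psi2 \<longleftrightarrow>
    \<comment> \<open>(T1)\<close>
    (\<forall>a\<in>X. \<forall>b\<in>X. \<forall>c\<in>X. lab a = lab b \<and> lab b = lab c \<longrightarrow>
        psi2 a b + psi2 (mul a b) c = sm (g1 a (iv a)) (psi2 b c) + psi2 a (mul b c)) \<and>
    \<comment> \<open>(T2)\<close>
    (\<forall>a\<in>X. \<forall>b\<in>X. lab a = lab b \<longrightarrow>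
        sm (g1 b (iv b)) (psi1 a b) + psi2 b (mul (mul (iv b) a) b) = psi2 a b) \<and>
    \<comment> \<open>(T3)\<close>
    (\<forall>x\<in>X. \<forall>a\<in>X. \<forall>b\<in>X. lab a = lab b \<longrightarrow>
        sm (g2 x (mul a b)) (psi2 a b) + psi1 x (mul a b)
          = sm (g1 (tri x a) b) (psi1 x a) + psi1 (tri x a) b) \<and>
    \<comment> \<open>(T4)\<close>
    (\<forall>x\<in>X. \<forall>y\<in>X. \<forall>z\<in>X.
        sm (g1 (tri x y) z) (psi1 x y) + psi1 (tri x y) z
          = sm (g1 (tri x z) (tri y z)) (psi1 x z) + sm (g2 (tri x z) (tri y z)) (psi1 y z)
            + psi1 (tri x z) (tri y z)) \<and>
    \<comment> \<open>(T5)\<close>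
    (\<forall>a\<in>X. \<forall>b\<in>X. \<forall>x\<in>X. lab a = lab b \<longrightarrow>
        sm (g1 (mul a b) x) (psi2 a b) + psi1 (mul a b) x
          = psi1 a x + sm (g1 (tri a x) (tri (iv a) x)) (psi1 b x) + psi2 (tri a x) (tri b x))"

definition aug_mcq_alexander_pair where
  "aug_mcq_alexander_pair X lab mul e iv tri sm g1 g2 psi1 psi2 \<longleftrightarrow>
    mcq_alexander_pair X lab mul e iv tri g1 g2 \<and>
    twisted_2cocycle X lab mul e iv tri sm g1 g2 psi1 psi2"

definition mcq_iso ::
  "'a set \<Rightarrow> ('a \<Rightarrow> 'l) \<Rightarrow> ('a \<Rightarrow> 'a \<Rightarrow> 'a) \<Rightarrow> ('a \<Rightarrow> 'a \<Rightarrow> 'a)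
   \<Rightarrow> 'b set \<Rightarrow> ('b \<Rightarrow> 'k) \<Rightarrow> ('b \<Rightarrow> 'b \<Rightarrow> 'b) \<Rightarrow> ('b \<Rightarrow> 'b \<Rightarrow> 'b) \<Rightarrow> ('a \<Rightarrow> 'b) \<Rightarrow> bool" where
  "mcq_iso A labA mulA triA B labB mulB triB F \<longleftrightarrow>
    bij_betw F A B \<and>
    (\<forall>x\<in>A. \<forall>y\<in>A. F (triA x y) = triB (F x) (F y)) \<and>
    (\<forall>a\<in>A. \<forall>b\<in>A. labA a = labA b \<longrightarrow>
        labB (F a) = labB (F b) \<and> F (mulA a b) = mulB (F a) (F b))"

text \<open>The extensions X~(f1,f2,f3,f4;phi1,phi2) and X~(g1,g2;psi1,psi2): carrier X \<times> M,
  (x,u) lies in the group G_(lab x) \<times> M.\<close>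
definition ext_tri_f where
  "ext_tri_f tri sm f1 f2 phi1 =
     (\<lambda>(x, u) (y, v). (tri x y, sm (f1 x y) u + sm (f2 x y) v + phi1 x y))"

definition ext_mul_f where
  "ext_mul_f mul sm f3 f4 phi2 =
     (\<lambda>(a, u) (b, v). (mul a b, sm (f3 a b) u + sm (f4 a b) v + phi2 a b))"

definition ext_mul_g where
  "ext_mul_g mul iv sm g1 psi2 =
     (\<lambda>(a, u) (b, v). (mul a b, u + sm (g1 a (iv a)) v + psi2 a b))"

end

theory Submission
  imports Defs
begin

text \<open>
  Rescaling the fibres, \<open>(x, u) \<mapsto> (x, \<theta> x \<cdot> u)\<close> with units \<open>\<theta> x\<close>, is an isomorphism from
  \<open>X~(f\<^sub>1, f\<^sub>2, f\<^sub>3, f\<^sub>4; \<phi>\<^sub>1, \<phi>\<^sub>2)\<close> onto the extension built from the conjugated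
  coefficients \<open>\<theta>(x \<triangleleft> y) f\<^sub>1(x, y) \<theta>(x)\<^sup>-\<^sup>1\<close>, \<open>\<theta>(ab) f\<^sub>3(a, b) \<theta>(a)\<^sup>-\<^sup>1\<close>, \<dots>, and the conjugated
  six-tuple again satisfies (0-i)--(4-\<open>\<phi>\<close>). By (0-ii) the choice \<open>\<theta>(a) = f\<^sub>3(a, a\<^sup>-\<^sup>1)\<close> makes the
  new \<open>f\<^sub>3\<close> identically 1. Once \<open>f\<^sub>3 = 1\<close>, condition (0-iii) says that \<open>f\<^sub>4(a, b) = \<chi>(a)\<close> does not
  depend on \<open>b\<close>, (0-iv) makes \<open>\<chi>\<close> multiplicative and (1-i) gives \<open>f\<^sub>1(a, b) = \<chi>(b\<^sup>-\<^sup>1)\<close>; with these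
  substitutions the remaining conditions turn into (A1)--(A4) and (T1)--(T5) for
  \<open>(f\<^sub>1, f\<^sub>2; \<phi>\<^sub>1, \<phi>\<^sub>2)\<close>, and the group law of the extension into that of \<open>X~(g\<^sub>1, g\<^sub>2; \<psi>\<^sub>1, \<psi>\<^sub>2)\<close>.
\<close>

lemma invertible_r_mult: "invertible_r x \<Longrightarrow> invertible_r y \<Longrightarrow> invertible_r (x * y)"
  unfolding invertible_r_def by (metis mult.assoc mult_1_right)

definition ring_inverse :: "'r::ring_1 \<Rightarrow> 'r" where
  "ring_inverse r = (SOME s. r * s = 1 \<and> s * r = 1)"

lemma ring_inverse: "invertible_r r \<Longrightarrow> r * ring_inverse r = 1 \<and> ring_inverse r * r = 1"
  unfolding invertible_r_def ring_inverse_def by (rule someI_ex)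

locale multiple_conjugation_quandle =
  fixes X :: "'x set" and lab :: "'x \<Rightarrow> 'l" and mul :: "'x \<Rightarrow> 'x \<Rightarrow> 'x"
    and e :: "'l \<Rightarrow> 'x" and iv :: "'x \<Rightarrow> 'x" and tri :: "'x \<Rightarrow> 'x \<Rightarrow> 'x"
  assumes mul_closed [simp]: "a \<in> X \<Longrightarrow> b \<in> X \<Longrightarrow> lab a = lab b \<Longrightarrow> mul a b \<in> X"
    and lab_mul [simp]: "a \<in> X \<Longrightarrow> b \<in> X \<Longrightarrow> lab a = lab b \<Longrightarrow> lab (mul a b) = lab a"
    and mul_assoc: "a \<in> X \<Longrightarrow> b \<in> X \<Longrightarrow> c \<in> X \<Longrightarrow> lab a = lab b \<Longrightarrow> lab b = lab c \<Longrightarrow>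
      mul (mul a b) c = mul a (mul b c)"
    and unit_closed [simp]: "a \<in> X \<Longrightarrow> e (lab a) \<in> X"
    and lab_unit [simp]: "a \<in> X \<Longrightarrow> lab (e (lab a)) = lab a"
    and mul_unit_left [simp]: "a \<in> X \<Longrightarrow> mul (e (lab a)) a = a"
    and mul_unit_right [simp]: "a \<in> X \<Longrightarrow> mul a (e (lab a)) = a"
    and iv_closed [simp]: "a \<in> X \<Longrightarrow> iv a \<in> X"
    and lab_iv [simp]: "a \<in> X \<Longrightarrow> lab (iv a) = lab a"
    and mul_iv_left [simp]: "a \<in> X \<Longrightarrow> mul (iv a) a = e (lab a)"
    and mul_iv_right [simp]: "a \<in> X \<Longrightarrow> mul a (iv a) = e (lab a)"
    and tri_closed [simp]: "x \<in> X \<Longrightarrow> y \<in> X \<Longrightarrow> tri x y \<in> X"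
    and tri_conj: "a \<in> X \<Longrightarrow> b \<in> X \<Longrightarrow> lab a = lab b \<Longrightarrow> tri a b = mul (mul (iv b) a) b"
    and tri_unit [simp]: "x \<in> X \<Longrightarrow> a \<in> X \<Longrightarrow> tri x (e (lab a)) = x"
    and tri_mul: "x \<in> X \<Longrightarrow> a \<in> X \<Longrightarrow> b \<in> X \<Longrightarrow> lab a = lab b \<Longrightarrow>
      tri x (mul a b) = tri (tri x a) b"
    and tri_self_distrib: "x \<in> X \<Longrightarrow> y \<in> X \<Longrightarrow> z \<in> X \<Longrightarrow>
      tri (tri x y) z = tri (tri x z) (tri y z)"
    and lab_tri_eq: "x \<in> X \<Longrightarrow> a \<in> X \<Longrightarrow> b \<in> X \<Longrightarrow> lab a = lab b \<Longrightarrow>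
      lab (tri a x) = lab (tri b x)"
    and tri_mul_distrib: "x \<in> X \<Longrightarrow> a \<in> X \<Longrightarrow> b \<in> X \<Longrightarrow> lab a = lab b \<Longrightarrow>
      tri (mul a b) x = mul (tri a x) (tri b x)"

lemma multiple_conjugation_quandleI:
  "mcq X lab mul e iv tri \<Longrightarrow> multiple_conjugation_quandle X lab mul e iv tri"
  unfolding mcq_def by unfold_locales (elim conjE; metis)+

locale left_module =
  fixes sm :: "'r::ring_1 \<Rightarrow> 'm::ab_group_add \<Rightarrow> 'm"
  assumes scale_right_distrib: "sm r (u + v) = sm r u + sm r v"
    and scale_left_distrib: "sm (r + s) u = sm r u + sm s u"
    and scale_mult: "sm (r * s) u = sm r (sm s u)"
    and scale_one [simp]: "sm 1 u = u"

lemma left_moduleI: "lmodule sm \<Longrightarrow> left_module sm"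
  unfolding lmodule_def by unfold_locales blast+

context multiple_conjugation_quandle
begin

lemma mul_unit_left' [simp]: "a \<in> X \<Longrightarrow> lab a = l \<Longrightarrow> mul (e l) a = a"
  and mul_unit_right' [simp]: "a \<in> X \<Longrightarrow> lab a = l \<Longrightarrow> mul a (e l) = a"
  by auto

lemma mul_iv_cancel_left [simp]:
  "a \<in> X \<Longrightarrow> c \<in> X \<Longrightarrow> lab a = lab c \<Longrightarrow> mul a (mul (iv a) c) = c"
  using mul_assoc[of a "iv a" c] by simp

lemma iv_mul_cancel_left [simp]:
  "a \<in> X \<Longrightarrow> c \<in> X \<Longrightarrow> lab a = lab c \<Longrightarrow> mul (iv a) (mul a c) = c"
  using mul_assoc[of "iv a" a c] by simp

lemma iv_unique:
  assumes "a \<in> X" "b \<in> X" "lab a = lab b" "mul a b = e (lab a)"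
  shows "b = iv a"
  using iv_mul_cancel_left[of a b] assms by simp

lemma iv_iv [simp]: "a \<in> X \<Longrightarrow> iv (iv a) = a"
  using iv_unique[of "iv a" a] by simp

lemma iv_unit [simp]: "a \<in> X \<Longrightarrow> iv (e (lab a)) = e (lab a)"
  using iv_unique[of "e (lab a)" "e (lab a)"] by simp

lemma iv_mul:
  assumes "a \<in> X" "b \<in> X" "lab a = lab b"
  shows "iv (mul a b) = mul (iv b) (iv a)"
proof -
  have "mul (mul a b) (mul (iv b) (iv a)) = e (lab (mul a b))"
    using assms by (simp add: mul_assoc)
  with assms show ?thesis by (intro iv_unique[symmetric]) auto
qed

lemma tri_unit_left:
  assumes "a \<in> X" "x \<in> X"
  shows "tri (e (lab a)) x = e (lab (tri a x))"
proof -
  let ?u = "tri (e (lab a)) x"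
  have lab_u: "lab ?u = lab (tri a x)"
    using assms lab_tri_eq[of x a "e (lab a)"] by simp
  have "mul ?u ?u = ?u"
    using assms tri_mul_distrib[of x "e (lab a)" "e (lab a)"] by simp
  moreover have "?u = mul (iv ?u) (mul ?u ?u)"
    using assms by simp
  ultimately have "?u = mul (iv ?u) ?u"
    by simp
  with assms lab_u show ?thesis
    by simp
qed

lemma iv_tri:
  assumes "a \<in> X" "x \<in> X"
  shows "tri (iv a) x = iv (tri a x)"
proof (rule iv_unique)
  show "lab (tri a x) = lab (tri (iv a) x)"
    using assms lab_tri_eq[of x a "iv a"] by simp
  then show "mul (tri a x) (tri (iv a) x) = e (lab (tri a x))"
    using assms tri_mul_distrib[of x a "iv a"] tri_unit_left[of a x] by simp
qed (use assms in auto)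

lemma lab_tri [simp]: "a \<in> X \<Longrightarrow> b \<in> X \<Longrightarrow> lab a = lab b \<Longrightarrow> lab (tri a b) = lab a"
  by (simp add: tri_conj)

lemma tri_as_conj: "a \<in> X \<Longrightarrow> b \<in> X \<Longrightarrow> lab a = lab b \<Longrightarrow> tri a b = mul (iv b) (mul a b)"
  by (simp add: tri_conj mul_assoc)

end

text \<open>The coefficients of the extension transported along \<open>(x, u) \<mapsto> (x, \<theta> x \<cdot> u)\<close>, where \<open>\<theta>'\<close>
  inverts \<open>\<theta>\<close> and \<open>op\<close> is \<open>tri\<close> for \<open>f\<^sub>1, f\<^sub>2, \<phi>\<^sub>1\<close> and \<open>mul\<close> for \<open>f\<^sub>3, f\<^sub>4, \<phi>\<^sub>2\<close>.\<close>

definition gauge_fst :: "('x \<Rightarrow> 'r::ring_1) \<Rightarrow> ('x \<Rightarrow> 'r) \<Rightarrow> ('x \<Rightarrow> 'x \<Rightarrow> 'x)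
    \<Rightarrow> ('x \<Rightarrow> 'x \<Rightarrow> 'r) \<Rightarrow> 'x \<Rightarrow> 'x \<Rightarrow> 'r" where
  "gauge_fst \<theta> \<theta>' op f x y = \<theta> (op x y) * f x y * \<theta>' x"

definition gauge_snd :: "('x \<Rightarrow> 'r::ring_1) \<Rightarrow> ('x \<Rightarrow> 'r) \<Rightarrow> ('x \<Rightarrow> 'x \<Rightarrow> 'x)
    \<Rightarrow> ('x \<Rightarrow> 'x \<Rightarrow> 'r) \<Rightarrow> 'x \<Rightarrow> 'x \<Rightarrow> 'r" where
  "gauge_snd \<theta> \<theta>' op f x y = \<theta> (op x y) * f x y * \<theta>' y"

definition gauge_const :: "('r::ring_1 \<Rightarrow> 'm \<Rightarrow> 'm) \<Rightarrow> ('x \<Rightarrow> 'r) \<Rightarrow> ('x \<Rightarrow> 'x \<Rightarrow> 'x)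
    \<Rightarrow> ('x \<Rightarrow> 'x \<Rightarrow> 'm) \<Rightarrow> 'x \<Rightarrow> 'x \<Rightarrow> 'm" where
  "gauge_const sm \<theta> op \<phi> x y = sm (\<theta> (op x y)) (\<phi> x y)"

lemma mcq_iso_cong_mul:
  assumes "mcq_iso A labA mulA triA B labB mulB triB F"
    and "\<And>p q. p \<in> B \<Longrightarrow> q \<in> B \<Longrightarrow> labB p = labB q \<Longrightarrow> mulB p q = mulB' p q"
  shows "mcq_iso A labA mulA triA B labB mulB' triB F"
  using assms unfolding mcq_iso_def bij_betw_def by (metis image_eqI)

context left_module
begin

lemma mcq_iso_gauge:
  fixes X :: "'x set" and \<theta> \<theta>' :: "'x \<Rightarrow> 'r"
  assumes inv: "\<And>x. x \<in> X \<Longrightarrow> \<theta> x * \<theta>' x = 1" "\<And>x. x \<in> X \<Longrightarrow> \<theta>' x * \<theta> x = 1"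
  shows "mcq_iso
      (X \<times> UNIV) (lab \<circ> fst) (ext_mul_f mul sm f3 f4 phi2) (ext_tri_f tri sm f1 f2 phi1)
      (X \<times> UNIV) (lab \<circ> fst)
      (ext_mul_f mul sm
        (gauge_fst \<theta> \<theta>' mul f3) (gauge_snd \<theta> \<theta>' mul f4) (gauge_const sm \<theta> mul phi2))
      (ext_tri_f tri sm
        (gauge_fst \<theta> \<theta>' tri f1) (gauge_snd \<theta> \<theta>' tri f2) (gauge_const sm \<theta> tri phi1))
      (\<lambda>(x, u). (x, sm (\<theta> x) u))"
proof -
  have cancel: "sm (\<theta> x) (sm (\<theta>' x) u) = u" "sm (\<theta>' x) (sm (\<theta> x) u) = u" if "x \<in> X" for x u
    using inv[OF that] by (simp_all flip: scale_mult)
  show ?thesis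
    unfolding mcq_iso_def
  proof (intro conjI ballI impI)
    show "bij_betw (\<lambda>(x, u). (x, sm (\<theta> x) u)) (X \<times> UNIV) (X \<times> UNIV)"
      by (rule bij_betw_byWitness[where f' = "\<lambda>(x, u). (x, sm (\<theta>' x) u)"]) (auto simp: cancel)
  qed (auto simp: ext_tri_f_def ext_mul_f_def gauge_fst_def gauge_snd_def gauge_const_def
         scale_right_distrib scale_mult cancel)
qed

end

locale six_tuple = multiple_conjugation_quandle X lab mul e iv tri + left_module sm
  for X :: "'x set" and lab :: "'x \<Rightarrow> 'l" and mul :: "'x \<Rightarrow> 'x \<Rightarrow> 'x"
    and e :: "'l \<Rightarrow> 'x" and iv :: "'x \<Rightarrow> 'x" and tri :: "'x \<Rightarrow> 'x \<Rightarrow> 'x"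
    and sm :: "'r::ring_1 \<Rightarrow> 'm::ab_group_add \<Rightarrow> 'm" +
  fixes f1 f2 f3 f4 :: "'x \<Rightarrow> 'x \<Rightarrow> 'r" and phi1 phi2 :: "'x \<Rightarrow> 'x \<Rightarrow> 'm"
  assumes cond_0i: "a \<in> X \<Longrightarrow> b \<in> X \<Longrightarrow> lab a = lab b \<Longrightarrow>
      invertible_r (f3 a b) \<and> invertible_r (f4 a b)"
    and cond_0ii: "a \<in> X \<Longrightarrow> b \<in> X \<Longrightarrow> c \<in> X \<Longrightarrow> lab a = lab b \<Longrightarrow> lab b = lab c \<Longrightarrow>
      f3 (mul a b) c * f3 a b = f3 a (mul b c)"
    and cond_0iii: "a \<in> X \<Longrightarrow> b \<in> X \<Longrightarrow> c \<in> X \<Longrightarrow> lab a = lab b \<Longrightarrow> lab b = lab c \<Longrightarrow>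
      f3 (mul a b) c * f4 a b = f4 a (mul b c) * f3 b c"
    and cond_0iv: "a \<in> X \<Longrightarrow> b \<in> X \<Longrightarrow> c \<in> X \<Longrightarrow> lab a = lab b \<Longrightarrow> lab b = lab c \<Longrightarrow>
      f4 (mul a b) c = f4 a (mul b c) * f4 b c"
    and cond_0phi: "a \<in> X \<Longrightarrow> b \<in> X \<Longrightarrow> c \<in> X \<Longrightarrow> lab a = lab b \<Longrightarrow> lab b = lab c \<Longrightarrow>
      sm (f3 (mul a b) c) (phi2 a b) + phi2 (mul a b) c
        = sm (f4 a (mul b c)) (phi2 b c) + phi2 a (mul b c)"
    and cond_1i: "a \<in> X \<Longrightarrow> b \<in> X \<Longrightarrow> lab a = lab b \<Longrightarrow>
      f1 a b = f4 (iv b) (mul a b) * f3 a b"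
    and cond_1ii: "a \<in> X \<Longrightarrow> b \<in> X \<Longrightarrow> lab a = lab b \<Longrightarrow>
      f3 b (mul (mul (iv b) a) b) + f4 b (mul (mul (iv b) a) b) * f2 a b = f4 a b"
    and cond_1phi: "a \<in> X \<Longrightarrow> b \<in> X \<Longrightarrow> lab a = lab b \<Longrightarrow>
      sm (f4 b (mul (mul (iv b) a) b)) (phi1 a b) + phi2 b (mul (mul (iv b) a) b) = phi2 a b"
    and cond_2i: "x \<in> X \<Longrightarrow> a \<in> X \<Longrightarrow> f1 x (e (lab a)) = 1"
    and cond_2phi_i: "x \<in> X \<Longrightarrow> a \<in> X \<Longrightarrow>
      sm (f2 x (e (lab a))) (phi2 (e (lab a)) (e (lab a))) = phi1 x (e (lab a))"
    and cond_2ii: "x \<in> X \<Longrightarrow> a \<in> X \<Longrightarrow> b \<in> X \<Longrightarrow> lab a = lab b \<Longrightarrow>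
      f1 x (mul a b) = f1 (tri x a) b * f1 x a"
    and cond_2iii: "x \<in> X \<Longrightarrow> a \<in> X \<Longrightarrow> b \<in> X \<Longrightarrow> lab a = lab b \<Longrightarrow>
      f2 x (mul a b) * f3 a b = f1 (tri x a) b * f2 x a"
    and cond_2iv: "x \<in> X \<Longrightarrow> a \<in> X \<Longrightarrow> b \<in> X \<Longrightarrow> lab a = lab b \<Longrightarrow>
      f2 x (mul a b) * f4 a b = f2 (tri x a) b"
    and cond_2phi_ii: "x \<in> X \<Longrightarrow> a \<in> X \<Longrightarrow> b \<in> X \<Longrightarrow> lab a = lab b \<Longrightarrow>
      sm (f2 x (mul a b)) (phi2 a b) + phi1 x (mul a b)
        = sm (f1 (tri x a) b) (phi1 x a) + phi1 (tri x a) b"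
    and cond_3i: "x \<in> X \<Longrightarrow> y \<in> X \<Longrightarrow> z \<in> X \<Longrightarrow>
      f1 (tri x y) z * f1 x y = f1 (tri x z) (tri y z) * f1 x z"
    and cond_3ii: "x \<in> X \<Longrightarrow> y \<in> X \<Longrightarrow> z \<in> X \<Longrightarrow>
      f1 (tri x y) z * f2 x y = f2 (tri x z) (tri y z) * f1 y z"
    and cond_3iii: "x \<in> X \<Longrightarrow> y \<in> X \<Longrightarrow> z \<in> X \<Longrightarrow>
      f2 (tri x y) z = f1 (tri x z) (tri y z) * f2 x z + f2 (tri x z) (tri y z) * f2 y z"
    and cond_3phi: "x \<in> X \<Longrightarrow> y \<in> X \<Longrightarrow> z \<in> X \<Longrightarrow>
      sm (f1 (tri x y) z) (phi1 x y) + phi1 (tri x y) z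
        = sm (f1 (tri x z) (tri y z)) (phi1 x z) + sm (f2 (tri x z) (tri y z)) (phi1 y z)
          + phi1 (tri x z) (tri y z)"
    and cond_4i: "a \<in> X \<Longrightarrow> b \<in> X \<Longrightarrow> x \<in> X \<Longrightarrow> lab a = lab b \<Longrightarrow>
      f1 (mul a b) x * f3 a b = f3 (tri a x) (tri b x) * f1 a x"
    and cond_4ii: "a \<in> X \<Longrightarrow> b \<in> X \<Longrightarrow> x \<in> X \<Longrightarrow> lab a = lab b \<Longrightarrow>
      f1 (mul a b) x * f4 a b = f4 (tri a x) (tri b x) * f1 b x"
    and cond_4iii: "a \<in> X \<Longrightarrow> b \<in> X \<Longrightarrow> x \<in> X \<Longrightarrow> lab a = lab b \<Longrightarrow>
      f2 (mul a b) x = f3 (tri a x) (tri b x) * f2 a x + f4 (tri a x) (tri b x) * f2 b x"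
    and cond_4phi: "a \<in> X \<Longrightarrow> b \<in> X \<Longrightarrow> x \<in> X \<Longrightarrow> lab a = lab b \<Longrightarrow>
      sm (f1 (mul a b) x) (phi2 a b) + phi1 (mul a b) x
        = sm (f3 (tri a x) (tri b x)) (phi1 a x) + sm (f4 (tri a x) (tri b x)) (phi1 b x)
          + phi2 (tri a x) (tri b x)"

lemma six_tupleI:
  assumes "mcq X lab mul e iv tri" "lmodule sm" "six_cond X lab mul e iv tri sm f1 f2 f3 f4 phi1 phi2"
  shows "six_tuple X lab mul e iv tri sm f1 f2 f3 f4 phi1 phi2"
proof (intro six_tuple.intro multiple_conjugation_quandleI left_moduleI)
  show "six_tuple_axioms X lab mul e iv tri sm f1 f2 f3 f4 phi1 phi2"
    using assms(3) unfolding six_cond_def by unfold_locales (elim conjE; metis)+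
qed (fact assms)+

locale six_tuple_gauge = six_tuple X lab mul e iv tri sm f1 f2 f3 f4 phi1 phi2
  for X :: "'x set" and lab mul e iv tri and sm :: "'r::ring_1 \<Rightarrow> 'm::ab_group_add \<Rightarrow> 'm"
    and f1 f2 f3 f4 phi1 phi2 +
  fixes \<theta> \<theta>' :: "'x \<Rightarrow> 'r"
  assumes gauge_right_inverse: "x \<in> X \<Longrightarrow> \<theta> x * \<theta>' x = 1"
    and gauge_left_inverse: "x \<in> X \<Longrightarrow> \<theta>' x * \<theta> x = 1"
begin

lemma gauge_cancel [simp]:
  "x \<in> X \<Longrightarrow> r * \<theta>' x * \<theta> x = r"
  "x \<in> X \<Longrightarrow> r * \<theta> x * \<theta>' x = r"
  "x \<in> X \<Longrightarrow> sm (\<theta>' x) (sm (\<theta> x) u) = u"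
  by (simp_all add: mult.assoc gauge_left_inverse gauge_right_inverse flip: scale_mult)

lemma gauge_invertible: "x \<in> X \<Longrightarrow> invertible_r (\<theta> x)" "x \<in> X \<Longrightarrow> invertible_r (\<theta>' x)"
  unfolding invertible_r_def using gauge_left_inverse gauge_right_inverse by blast+

lemmas gauge_simps = gauge_fst_def gauge_snd_def gauge_const_def mult.assoc[symmetric]
  distrib_left distrib_right scale_mult scale_right_distrib mul_assoc

text \<open>Each conjugated condition is the original one multiplied by \<open>\<theta>\<close> on the left and \<open>\<theta>'\<close> on the
  right (acted on by \<open>\<theta>\<close>, for the module-valued ones): in a product of conjugated coefficients the
  inner factors \<open>\<theta>' y * \<theta> y\<close> cancel.\<close>

sublocale gauged: six_tuple X lab mul e iv tri sm
  "gauge_fst \<theta> \<theta>' tri f1" "gauge_snd \<theta> \<theta>' tri f2"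
  "gauge_fst \<theta> \<theta>' mul f3" "gauge_snd \<theta> \<theta>' mul f4"
  "gauge_const sm \<theta> tri phi1" "gauge_const sm \<theta> mul phi2"
  apply unfold_locales
  subgoal for a b
    using cond_0i[of a b] by (simp add: gauge_fst_def gauge_snd_def invertible_r_mult gauge_invertible)
  subgoal for a b c
    using arg_cong[OF cond_0ii[of a b c], of "\<lambda>t. \<theta> (mul a (mul b c)) * t * \<theta>' a"]
    by (simp add: gauge_simps)
  subgoal for a b c
    using arg_cong[OF cond_0iii[of a b c],
      of "\<lambda>t. \<theta> (mul a (mul b c)) * t * \<theta>' b"]
    by (simp add: gauge_simps)
  subgoal for a b c
    using arg_cong[OF cond_0iv[of a b c], of "\<lambda>t. \<theta> (mul a (mul b c)) * t * \<theta>' c"]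
    by (simp add: gauge_simps)
  subgoal for a b c
    using arg_cong[OF cond_0phi[of a b c], of "sm (\<theta> (mul a (mul b c)))"]
    by (simp add: gauge_simps)
  subgoal for a b
    using arg_cong[OF cond_1i[of a b], of "\<lambda>t. \<theta> (tri a b) * t * \<theta>' a"]
    by (simp add: gauge_simps tri_as_conj)
  subgoal for a b
    using arg_cong[OF cond_1ii[of a b], of "\<lambda>t. \<theta> (mul a b) * t * \<theta>' b"]
    by (simp add: gauge_simps tri_as_conj)
  subgoal for a b
    using arg_cong[OF cond_1phi[of a b], of "sm (\<theta> (mul a b))"]
    by (simp add: gauge_simps tri_as_conj)
  subgoal for x a
    using cond_2i[of x a] by (simp add: gauge_simps gauge_right_inverse)
  subgoal for x a
    using arg_cong[OF cond_2phi_i[of x a], of "sm (\<theta> x)"] by (simp add: gauge_simps)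
  subgoal for x a b
    using arg_cong[OF cond_2ii[of x a b], of "\<lambda>t. \<theta> (tri (tri x a) b) * t * \<theta>' x"]
    by (simp add: gauge_simps tri_mul)
  subgoal for x a b
    using arg_cong[OF cond_2iii[of x a b],
      of "\<lambda>t. \<theta> (tri (tri x a) b) * t * \<theta>' a"]
    by (simp add: gauge_simps tri_mul)
  subgoal for x a b
    using arg_cong[OF cond_2iv[of x a b], of "\<lambda>t. \<theta> (tri (tri x a) b) * t * \<theta>' b"]
    by (simp add: gauge_simps tri_mul)
  subgoal for x a b
    using arg_cong[OF cond_2phi_ii[of x a b], of "sm (\<theta> (tri (tri x a) b))"]
    by (simp add: gauge_simps tri_mul)
  subgoal for x y z
    using arg_cong[OF cond_3i[of x y z], of "\<lambda>t. \<theta> (tri (tri x z) (tri y z)) * t * \<theta>' x"]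
    by (simp add: gauge_simps tri_self_distrib[of x y z])
  subgoal for x y z
    using arg_cong[OF cond_3ii[of x y z], of "\<lambda>t. \<theta> (tri (tri x z) (tri y z)) * t * \<theta>' y"]
    by (simp add: gauge_simps tri_self_distrib[of x y z])
  subgoal for x y z
    using arg_cong[OF cond_3iii[of x y z], of "\<lambda>t. \<theta> (tri (tri x z) (tri y z)) * t * \<theta>' z"]
    by (simp add: gauge_simps tri_self_distrib[of x y z])
  subgoal for x y z
    using arg_cong[OF cond_3phi[of x y z], of "sm (\<theta> (tri (tri x z) (tri y z)))"]
    by (simp add: gauge_simps tri_self_distrib[of x y z])
  subgoal for a b x
    using arg_cong[OF cond_4i[of a b x], of "\<lambda>t. \<theta> (mul (tri a x) (tri b x)) * t * \<theta>' a"]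
    by (simp add: gauge_simps tri_mul_distrib)
  subgoal for a b x
    using arg_cong[OF cond_4ii[of a b x], of "\<lambda>t. \<theta> (mul (tri a x) (tri b x)) * t * \<theta>' b"]
    by (simp add: gauge_simps tri_mul_distrib)
  subgoal for a b x
    using arg_cong[OF cond_4iii[of a b x], of "\<lambda>t. \<theta> (mul (tri a x) (tri b x)) * t * \<theta>' x"]
    by (simp add: gauge_simps tri_mul_distrib)
  subgoal for a b x
    using arg_cong[OF cond_4phi[of a b x], of "sm (\<theta> (mul (tri a x) (tri b x)))"]
    by (simp add: gauge_simps tri_mul_distrib)
  done

end

locale normalized_six_tuple = six_tuple +
  assumes f3_one: "a \<in> X \<Longrightarrow> b \<in> X \<Longrightarrow> lab a = lab b \<Longrightarrow> f3 a b = 1"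
begin

definition chi where
  "chi a = f4 a (e (lab a))"

lemma f4_eq_chi: assumes "a \<in> X" "b \<in> X" "lab a = lab b" shows "f4 a b = chi a"
proof -
  have "f3 (mul a b) (iv b) * f4 a b = f4 a (mul b (iv b)) * f3 b (iv b)"
    using assms by (intro cond_0iii) simp_all
  then have "f4 a b = f4 a (mul b (iv b))"
    using assms f3_one[of "mul a b" "iv b"] f3_one[of b "iv b"] by simp
  then show ?thesis using assms by (simp add: chi_def)
qed

lemma f1_eq_chi: assumes "a \<in> X" "b \<in> X" "lab a = lab b" shows "f1 a b = chi (iv b)"
  using cond_1i[of a b] assms by (simp add: f3_one f4_eq_chi)

lemma chi_eq_f1: "a \<in> X \<Longrightarrow> f1 a (iv a) = chi a"
  by (simp add: f1_eq_chi)

lemma chi_mul: assumes "a \<in> X" "b \<in> X" "lab a = lab b" shows "chi (mul a b) = chi a * chi b"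
  using cond_0iv[of a b b] assms by (simp add: f4_eq_chi)

lemma chi_iv_mul_chi: assumes "b \<in> X" shows "chi (iv b) * chi b = 1"
  using assms chi_mul[of "iv b" b] chi_eq_f1[of "e (lab b)"] cond_2i[of "e (lab b)" b] by simp

lemma f1_mul_left: assumes "a \<in> X" "b \<in> X" "x \<in> X" "lab a = lab b"
  shows "f1 (mul a b) x = f1 a x"
  using cond_4i[of a b x] assms lab_tri_eq[of x a b] by (simp add: f3_one)

lemma f2_mul_right: assumes "x \<in> X" "a \<in> X" "b \<in> X" "lab a = lab b"
  shows "f2 x (mul a b) = f1 (tri x a) b * f2 x a"
  using cond_2iii[of x a b] assms by (simp add: f3_one)

lemma f1_tri_iv: assumes "a \<in> X" "b \<in> X" "x \<in> X" "lab a = lab b"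
  shows "f1 (tri b x) (tri (iv a) x) = chi (tri a x)"
  using assms lab_tri_eq[of x a b] by (simp add: iv_tri f1_eq_chi)

lemma f2_mul_left: assumes "a \<in> X" "b \<in> X" "x \<in> X" "lab a = lab b"
  shows "f2 (mul a b) x = f2 a x + chi (tri a x) * f2 b x"
  using cond_4iii[of a b x] assms lab_tri_eq[of x a b] by (simp add: f3_one f4_eq_chi)

lemma mcq_alexander_pair: "mcq_alexander_pair X lab mul e iv tri f1 f2"
  unfolding mcq_alexander_pair_def
proof (intro conjI ballI impI)
  fix a b assume ab: "a \<in> X" "b \<in> X" "lab a = lab b"
  have "1 + chi b * f2 a b = chi a"
    using cond_1ii[of a b] ab by (simp add: f3_one f4_eq_chi)
  then have "chi (iv b) + f2 a b = chi (iv b) * chi a"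
    using chi_iv_mul_chi[of b] ab by (metis distrib_left mult.assoc mult_1_left mult_1_right)
  then show "f1 a b + f2 a b = f1 a (mul (iv a) b)"
    using ab by (simp add: f1_eq_chi iv_mul chi_mul)
next
  fix a b x assume "a \<in> X" "b \<in> X" "x \<in> X" "lab a = lab b"
  then show "f1 a x = f1 b x"
    and "f2 (mul a b) x = f2 a x + f1 (tri b x) (tri (iv a) x) * f2 b x"
    using f1_mul_left[of a "mul (iv a) b" x] by (simp_all add: f1_tri_iv f2_mul_left)
qed (rule cond_2i cond_2ii f2_mul_right cond_3i cond_3ii cond_3iii; assumption)+

lemma twisted_2cocycle: "twisted_2cocycle X lab mul e iv tri sm f1 f2 phi1 phi2"
  unfolding twisted_2cocycle_def
proof (intro conjI ballI impI)
  fix a b c assume "a \<in> X" "b \<in> X" "c \<in> X" "lab a = lab b \<and> lab b = lab c"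
  then show "phi2 a b + phi2 (mul a b) c = sm (f1 a (iv a)) (phi2 b c) + phi2 a (mul b c)"
    using cond_0phi[of a b c] by (simp add: f3_one f4_eq_chi chi_eq_f1)
next
  fix a b assume "a \<in> X" "b \<in> X" "lab a = lab b"
  then show "sm (f1 b (iv b)) (phi1 a b) + phi2 b (mul (mul (iv b) a) b) = phi2 a b"
    using cond_1phi[of a b] by (simp add: f4_eq_chi chi_eq_f1 tri_conj[symmetric])
next
  fix a b x assume "a \<in> X" "b \<in> X" "x \<in> X" "lab a = lab b"
  then show "sm (f1 (mul a b) x) (phi2 a b) + phi1 (mul a b) x
      = phi1 a x + sm (f1 (tri a x) (tri (iv a) x)) (phi1 b x) + phi2 (tri a x) (tri b x)"
    using cond_4phi[of a b x] lab_tri_eq[of x a b] by (simp add: f3_one f4_eq_chi f1_tri_iv)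
qed (rule cond_2phi_ii cond_3phi; assumption)+

lemma ext_mul_f_eq_ext_mul_g:
  assumes "p \<in> X \<times> UNIV" "q \<in> X \<times> UNIV" "(lab \<circ> fst) p = (lab \<circ> fst) q"
  shows "ext_mul_f mul sm f3 f4 phi2 p q = ext_mul_g mul iv sm f1 phi2 p q"
  using assms by (auto simp: ext_mul_f_def ext_mul_g_def f3_one f4_eq_chi chi_eq_f1)

end

context six_tuple
begin

definition normalizing_gauge where
  "normalizing_gauge a = f3 a (iv a)"

lemma normalizing_gauge_invertible: "a \<in> X \<Longrightarrow> invertible_r (normalizing_gauge a)"
  unfolding normalizing_gauge_def using cond_0i by simp

lemma normalizing_gauge_mul: assumes "a \<in> X" "b \<in> X" "lab a = lab b"
  shows "normalizing_gauge (mul a b) * f3 a b = normalizing_gauge a"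
proof -
  have "f3 (mul a b) (iv (mul a b)) * f3 a b = f3 a (mul b (iv (mul a b)))"
    using assms by (intro cond_0ii) simp_all
  moreover have "mul b (iv (mul a b)) = iv a"
    using assms by (simp add: iv_mul)
  ultimately show ?thesis
    by (simp add: normalizing_gauge_def)
qed

end

theorem theorem4p3:
  fixes X :: "'x set" and lab :: "'x \<Rightarrow> 'l" and mul :: "'x \<Rightarrow> 'x \<Rightarrow> 'x"
    and e :: "'l \<Rightarrow> 'x" and iv :: "'x \<Rightarrow> 'x" and tri :: "'x \<Rightarrow> 'x \<Rightarrow> 'x"
    and sm :: "'r::ring_1 \<Rightarrow> 'm::ab_group_add \<Rightarrow> 'm"
    and f1 f2 f3 f4 :: "'x \<Rightarrow> 'x \<Rightarrow> 'r" and phi1 phi2 :: "'x \<Rightarrow> 'x \<Rightarrow> 'm"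
  assumes "mcq X lab mul e iv tri"
    and "lmodule sm"
    and "six_cond X lab mul e iv tri sm f1 f2 f3 f4 phi1 phi2"
  shows "\<exists>(g1 :: 'x \<Rightarrow> 'x \<Rightarrow> 'r) (g2 :: 'x \<Rightarrow> 'x \<Rightarrow> 'r) (psi1 :: 'x \<Rightarrow> 'x \<Rightarrow> 'm)
           (psi2 :: 'x \<Rightarrow> 'x \<Rightarrow> 'm).
           aug_mcq_alexander_pair X lab mul e iv tri sm g1 g2 psi1 psi2 \<and>
           (\<exists>F. mcq_iso (X \<times> UNIV) (lab \<circ> fst) (ext_mul_f mul sm f3 f4 phi2)
                   (ext_tri_f tri sm f1 f2 phi1)
                 (X \<times> UNIV) (lab \<circ> fst) (ext_mul_g mul iv sm g1 psi2)
                   (ext_tri_f tri sm g1 g2 psi1) F)"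
proof -
  interpret six_tuple X lab mul e iv tri sm f1 f2 f3 f4 phi1 phi2
    using assms by (rule six_tupleI)
  let ?\<theta> = normalizing_gauge and ?\<theta>' = "\<lambda>a. ring_inverse (normalizing_gauge a)"
  have inverse: "?\<theta> a * ?\<theta>' a = 1" "?\<theta>' a * ?\<theta> a = 1" if "a \<in> X" for a
    using ring_inverse[OF normalizing_gauge_invertible[OF that]] by simp_all
  interpret six_tuple_gauge X lab mul e iv tri sm f1 f2 f3 f4 phi1 phi2 ?\<theta> ?\<theta>'
    by unfold_locales (fact inverse)+
  interpret normalized: normalized_six_tuple X lab mul e iv tri sm
      "gauge_fst ?\<theta> ?\<theta>' tri f1" "gauge_snd ?\<theta> ?\<theta>' tri f2" "gauge_fst ?\<theta> ?\<theta>' mul f3"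
      "gauge_snd ?\<theta> ?\<theta>' mul f4" "gauge_const sm ?\<theta> tri phi1" "gauge_const sm ?\<theta> mul phi2"
    by unfold_locales (simp add: gauge_fst_def normalizing_gauge_mul inverse)
  show ?thesis
    unfolding aug_mcq_alexander_pair_def
    using normalized.mcq_alexander_pair normalized.twisted_2cocycle
      mcq_iso_cong_mul[OF mcq_iso_gauge[OF inverse] normalized.ext_mul_f_eq_ext_mul_g]
    by blast
qed

end
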